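(* For every integer $t \geq 1$, no graph in $\mathcal{H}_t$ has an odd $4$-coloring (and hence no graph in $\mathcal{H}_t$ has a PCF $4$-coloring).
   Context: For $t\ge 1$, $\mathcal{H}_t$ is the class of finite simple graphs having a connected component that consists of exactly $t$ blocks, each of which is a $5$-cycle. An odd $c$-coloring is a proper coloring with at most $c$ colors such that every non-isolated vertex has a color appearing an odd number of times in its open neighborhood. A PCF $c$-coloring is a proper coloring with at most $c$ colors such that every non-isolated vertex has a color appearing exactly once in its open neighborhood. *)

theory Defs
  imports Main
begin

definition simple_graph :: "'a set \<Rightarrow> ('a \<Rightarrow> 'a \<Rightarrow> bool) \<Rightarrow> bool" where
  "simple_graph V E \<longleftrightarrow> finite V \<and> (\<forall>u v. E u v \<longrightarrow> u \<in> V \<and> v \<in> V)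
     \<and> (\<forall>u v. E u v \<longrightarrow> E v u) \<and> (\<forall>v. \<not> E v v)"

definition connected_on :: "('a \<Rightarrow> 'a \<Rightarrow> bool) \<Rightarrow> 'a set \<Rightarrow> bool" where
  "connected_on E S \<longleftrightarrow> S \<noteq> {} \<and>
     (\<forall>x\<in>S. \<forall>y\<in>S. (\<lambda>u w. u \<in> S \<and> w \<in> S \<and> E u w)\<^sup>*\<^sup>* x y)"

definition is_component :: "'a set \<Rightarrow> ('a \<Rightarrow> 'a \<Rightarrow> bool) \<Rightarrow> 'a set \<Rightarrow> bool" where
  "is_component V E C \<longleftrightarrow> C \<subseteq> V \<and> connected_on E C \<and>
     (\<forall>C'. C \<subseteq> C' \<and> C' \<subseteq> V \<and> connected_on E C' \<longrightarrow> C' = C)"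

definition nonseparable_on :: "('a \<Rightarrow> 'a \<Rightarrow> bool) \<Rightarrow> 'a set \<Rightarrow> bool" where
  "nonseparable_on E S \<longleftrightarrow> connected_on E S \<and>
     (\<forall>v\<in>S. S - {v} \<noteq> {} \<longrightarrow> connected_on E (S - {v}))"

text \<open>Blocks: maximal connected subgraphs without a cut vertex (blocks are induced,
so they are determined by their vertex sets).\<close>
definition is_block :: "'a set \<Rightarrow> ('a \<Rightarrow> 'a \<Rightarrow> bool) \<Rightarrow> 'a set \<Rightarrow> bool" where
  "is_block V E B \<longleftrightarrow> B \<subseteq> V \<and> nonseparable_on E B \<and>
     (\<forall>B'. B \<subseteq> B' \<and> B' \<subseteq> V \<and> nonseparable_on E B' \<longrightarrow> B' = B)"

definition is_C5 :: "('a \<Rightarrow> 'a \<Rightarrow> bool) \<Rightarrow> 'a set \<Rightarrow> bool" where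
  "is_C5 E B \<longleftrightarrow> (\<exists>w :: nat \<Rightarrow> 'a. inj_on w {..<5} \<and> B = w ` {..<5} \<and>
     (\<forall>i<5. \<forall>j<5. E (w i) (w j) \<longleftrightarrow> (j = Suc i mod 5 \<or> i = Suc j mod 5)))"

definition in_H :: "nat \<Rightarrow> 'a set \<Rightarrow> ('a \<Rightarrow> 'a \<Rightarrow> bool) \<Rightarrow> bool" where
  "in_H t V E \<longleftrightarrow> simple_graph V E \<and> (\<exists>C. is_component V E C \<and>
     card {B. is_block V E B \<and> B \<subseteq> C} = t \<and>
     (\<forall>B. is_block V E B \<and> B \<subseteq> C \<longrightarrow> is_C5 E B))"

definition proper_coloring :: "'a set \<Rightarrow> ('a \<Rightarrow> 'a \<Rightarrow> bool) \<Rightarrow> nat \<Rightarrow> ('a \<Rightarrow> 'c) \<Rightarrow> bool" where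
  "proper_coloring V E c f \<longleftrightarrow> card (f ` V) \<le> c \<and>
     (\<forall>u\<in>V. \<forall>v\<in>V. E u v \<longrightarrow> f u \<noteq> f v)"

definition odd_coloring :: "'a set \<Rightarrow> ('a \<Rightarrow> 'a \<Rightarrow> bool) \<Rightarrow> nat \<Rightarrow> ('a \<Rightarrow> 'c) \<Rightarrow> bool" where
  "odd_coloring V E c f \<longleftrightarrow> proper_coloring V E c f \<and>
     (\<forall>v\<in>V. (\<exists>u\<in>V. E v u) \<longrightarrow> (\<exists>k. odd (card {u\<in>V. E v u \<and> f u = k})))"

definition pcf_coloring :: "'a set \<Rightarrow> ('a \<Rightarrow> 'a \<Rightarrow> bool) \<Rightarrow> nat \<Rightarrow> ('a \<Rightarrow> 'c) \<Rightarrow> bool" where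
  "pcf_coloring V E c f \<longleftrightarrow> proper_coloring V E c f \<and>
     (\<forall>v\<in>V. (\<exists>u\<in>V. E v u) \<longrightarrow> (\<exists>k. card {u\<in>V. E v u \<and> f u = k} = 1))"

end

theory Submission
  imports Defs
begin

(* In a proper colouring of a 5-cycle with at most four colours, some vertex sees a single
   colour on its two neighbours: otherwise any two vertices, being adjacent or having a common
   neighbour, would receive distinct colours. In an odd colouring, every vertex of the
   component sees two colours on its neighbours inside at least one of its blocks, since
   otherwise each block through it contributes an even number of neighbours to every colour
   class. Stepping from a vertex to such a block and then to a vertex of that block whose
   neighbourhood is monochromatic gives a self-map of the component that changes block at
   every step. It eventually cycles, and the union of a cycle of blocks is nonseparable,
   contradicting the maximality of blocks. *)

section \<open>Connected and nonseparable sets\<close>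

lemma rtranclp_induced_mono:
  assumes "S \<subseteq> T" "(\<lambda>u w. u \<in> S \<and> w \<in> S \<and> E u w)\<^sup>*\<^sup>* x y"
  shows "(\<lambda>u w. u \<in> T \<and> w \<in> T \<and> E u w)\<^sup>*\<^sup>* x y"
  using assms(2) by (rule mono_rtranclp[rule_format, rotated]) (use assms(1) in blast)

lemma connected_on_Un:
  assumes "connected_on E S" "connected_on E T" "c \<in> S" "c \<in> T"
  shows "connected_on E (S \<union> T)"
  unfolding connected_on_def
proof (intro conjI ballI)
  show "S \<union> T \<noteq> {}" using assms(3) by blast
  let ?R = "\<lambda>u w. u \<in> S \<union> T \<and> w \<in> S \<union> T \<and> E u w"
  have "?R\<^sup>*\<^sup>* x y" if "x \<in> S" "y \<in> S" for x y
    using that assms(1) rtranclp_induced_mono[of S "S \<union> T" E x y] unfolding connected_on_def by blast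
  moreover have "?R\<^sup>*\<^sup>* x y" if "x \<in> T" "y \<in> T" for x y
    using that assms(2) rtranclp_induced_mono[of T "S \<union> T" E x y] unfolding connected_on_def by blast
  ultimately have to_c: "?R\<^sup>*\<^sup>* x c" and from_c: "?R\<^sup>*\<^sup>* c x" if "x \<in> S \<union> T" for x
    using that assms(3,4) by blast+
  fix x y assume "x \<in> S \<union> T" "y \<in> S \<union> T"
  then show "?R\<^sup>*\<^sup>* x y" using to_c from_c by (blast intro: rtranclp_trans)
qed

lemma connected_on_chain:
  assumes "\<And>l. l \<le> n \<Longrightarrow> connected_on E (S l)" "\<And>l. l < n \<Longrightarrow> S l \<inter> S (Suc l) \<noteq> {}"
  shows "connected_on E (\<Union>l\<le>n. S l)"
  using assms
proof (induction n)
  case 0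
  then show ?case by simp
next
  case (Suc n)
  have IH: "connected_on E (\<Union>l\<le>n. S l)"
    by (rule Suc.IH) (simp_all add: Suc.prems)
  obtain c where "c \<in> S n" "c \<in> S (Suc n)" using Suc.prems(2)[of n] by blast
  then have "connected_on E ((\<Union>l\<le>n. S l) \<union> S (Suc n))"
    using connected_on_Un[OF IH Suc.prems(1)[OF order_refl]] by blast
  moreover have "(\<Union>l\<le>Suc n. S l) = (\<Union>l\<le>n. S l) \<union> S (Suc n)"
    by (auto simp: atMost_Suc)
  ultimately show ?case by simp
qed

lemma connected_on_neighbour:
  assumes "connected_on E S" "v \<in> S" "c \<in> S" "c \<noteq> v"
  obtains u where "u \<in> S" "E v u"
proof -
  have "(\<lambda>u w. u \<in> S \<and> w \<in> S \<and> E u w)\<^sup>*\<^sup>* v c"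
    using assms(1-3) unfolding connected_on_def by blast
  then show ?thesis using assms(4) that by (metis (no_types, lifting) converse_rtranclpE)
qed

lemma nonseparable_on_edge:
  assumes "E u v" "E v u"
  shows "nonseparable_on E {u, v}"
  unfolding nonseparable_on_def
proof (intro conjI ballI impI)
  show "connected_on E {u, v}"
    unfolding connected_on_def using assms by (auto intro: r_into_rtranclp)
  fix x assume "x \<in> {u, v}" "{u, v} - {x} \<noteq> {}"
  then obtain y where "{u, v} - {x} = {y}" by auto
  then show "connected_on E ({u, v} - {x})"
    unfolding connected_on_def by simp
qed

lemma nonseparable_on_Diff:
  assumes "nonseparable_on E S" "S - {x} \<noteq> {}"
  shows "connected_on E (S - {x})"
proof (cases "x \<in> S")
  case True
  then show ?thesis using assms unfolding nonseparable_on_def by blast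
next
  case False
  then show ?thesis using assms(1) unfolding nonseparable_on_def by simp
qed

text \<open>After deleting any vertex the two sets still share a vertex.\<close>
lemma nonseparable_on_Un:
  assumes S: "nonseparable_on E S" and T: "nonseparable_on E T"
    and "a \<in> S" "a \<in> T" "b \<in> S" "b \<in> T" "a \<noteq> b"
  shows "nonseparable_on E (S \<union> T)"
  unfolding nonseparable_on_def
proof (intro conjI ballI impI)
  have "connected_on E S" "connected_on E T"
    using S T unfolding nonseparable_on_def by blast+
  then show "connected_on E (S \<union> T)" using assms(3,4) by (rule connected_on_Un)
  fix x
  define c where "c = (if x = a then b else a)"
  have c: "c \<in> S - {x}" "c \<in> T - {x}" using assms(3-7) unfolding c_def by auto
  have "connected_on E (S - {x})" by (rule nonseparable_on_Diff[OF S]) (use c in blast)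
  moreover have "connected_on E (T - {x})" by (rule nonseparable_on_Diff[OF T]) (use c in blast)
  ultimately have "connected_on E ((S - {x}) \<union> (T - {x}))"
    using c by (rule connected_on_Un)
  moreover have "S \<union> T - {x} = (S - {x}) \<union> (T - {x})" by blast
  ultimately show "connected_on E (S \<union> T - {x})" by simp
qed

section \<open>Blocks\<close>

lemma is_block_maximal:
  assumes "is_block V E B" "B \<subseteq> B'" "B' \<subseteq> V" "nonseparable_on E B'"
  shows "B' = B"
  using assms unfolding is_block_def by blast

lemma is_block_eq:
  assumes S: "is_block V E S" and T: "is_block V E T"
    and "a \<in> S" "a \<in> T" "b \<in> S" "b \<in> T" "a \<noteq> b"
  shows "S = T"
proof -
  have "nonseparable_on E S" "S \<subseteq> V" "nonseparable_on E T" "T \<subseteq> V"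
    using S T unfolding is_block_def by simp_all
  then have U: "nonseparable_on E (S \<union> T)" "S \<union> T \<subseteq> V"
    using nonseparable_on_Un[OF _ _ assms(3-7)] by simp_all
  have "S \<union> T = S" by (rule is_block_maximal[OF S _ U(2,1)]) blast
  moreover have "S \<union> T = T" by (rule is_block_maximal[OF T _ U(2,1)]) blast
  ultimately show ?thesis by simp
qed

text \<open>The block of an edge: a nonseparable set of maximum size containing it.\<close>
lemma edge_in_block:
  assumes G: "simple_graph V E" and "E u v"
  obtains B where "is_block V E B" "u \<in> B" "v \<in> B"
proof -
  define F where "F = {S. {u, v} \<subseteq> S \<and> S \<subseteq> V \<and> nonseparable_on E S}"
  have finV: "finite V" and uv: "u \<in> V" "v \<in> V" "E v u"
    using G assms(2) unfolding simple_graph_def by blast+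
  have "{u, v} \<in> F"
    unfolding F_def using uv nonseparable_on_edge[of E u v, OF assms(2) uv(3)] by blast
  moreover have "card S < Suc (card V)" if "S \<in> F" for S
  proof -
    have "S \<subseteq> V" using that unfolding F_def by blast
    then show ?thesis using card_mono[OF finV] by (simp add: le_imp_less_Suc)
  qed
  ultimately obtain S where S: "S \<in> F" and max: "\<forall>S'. S' \<in> F \<longrightarrow> card S' \<le> card S"
    using ex_has_greatest_nat[of "\<lambda>S. S \<in> F" "{u, v}" card] by blast
  have "is_block V E S" unfolding is_block_def
  proof (intro conjI allI impI)
    show "S \<subseteq> V" "nonseparable_on E S" using S unfolding F_def by auto
    fix B' assume B': "S \<subseteq> B' \<and> B' \<subseteq> V \<and> nonseparable_on E B'"
    then have "B' \<in> F" using S unfolding F_def by auto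
    moreover have "finite B'" using B' finV rev_finite_subset by blast
    ultimately show "B' = S" using B' max card_seteq by (metis (no_types, lifting))
  qed
  then show ?thesis using S that unfolding F_def by blast
qed

lemma block_subset_component:
  assumes C: "is_component V E C" and B: "is_block V E B" and "x \<in> B" "x \<in> C"
  shows "B \<subseteq> C"
proof -
  have "connected_on E C" "C \<subseteq> V" "connected_on E B" "B \<subseteq> V"
    using C B unfolding is_component_def is_block_def nonseparable_on_def by simp_all
  then have "C \<union> B = C"
    using C connected_on_Un[of E C B x] assms(3,4) unfolding is_component_def by blast
  then show ?thesis by blast
qed

section \<open>Cycles of blocks\<close>

lemma finite_self_map_periodic_point:
  fixes G :: "'a \<Rightarrow> 'a"
  assumes "finite C" "c \<in> C" "\<And>v. v \<in> C \<Longrightarrow> G v \<in> C"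
  obtains y d where "y \<in> C" "0 < d" "(G ^^ d) y = y"
proof -
  have iter: "(G ^^ n) c \<in> C" for n
    using assms(2,3) by (induction n) auto
  have "\<not> inj_on (\<lambda>n. (G ^^ n) c) {..card C}"
  proof
    assume "inj_on (\<lambda>n. (G ^^ n) c) {..card C}"
    then have "card {..card C} \<le> card C"
      using card_inj_on_le iter assms(1) by blast
    then show False by simp
  qed
  then obtain i j where ij: "i < j" "(G ^^ i) c = (G ^^ j) c"
    unfolding inj_on_def by (metis linorder_neqE_nat)
  have "(G ^^ (j - i)) ((G ^^ i) c) = (G ^^ (j - i + i)) c"
    by (simp add: funpow_add)
  also have "\<dots> = (G ^^ i) c"
    using ij by simp
  finally show ?thesis using that iter ij(1) zero_less_diff by blast
qed

lemma funpow_least_period_inj_on: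
  assumes "0 < d" "(G ^^ d) y = y"
  obtains k where "0 < k" "(G ^^ k) y = y" "inj_on (\<lambda>n. (G ^^ n) y) {..<k}"
proof -
  define k where "k = (LEAST d. 0 < d \<and> (G ^^ d) y = y)"
  have k: "0 < k" "(G ^^ k) y = y"
    using LeastI[of "\<lambda>d. 0 < d \<and> (G ^^ d) y = y", OF conjI[OF assms]] unfolding k_def by auto
  have "(G ^^ a) y \<noteq> (G ^^ b) y" if "a < b" "b < k" for a b
  proof
    assume eq: "(G ^^ a) y = (G ^^ b) y"
    have "(G ^^ (k - b + a)) y = (G ^^ (k - b)) ((G ^^ a) y)"
      by (simp add: funpow_add)
    also have "\<dots> = (G ^^ (k - b + b)) y"
      unfolding eq by (simp add: funpow_add)
    also have "\<dots> = y"
      using k \<open>b < k\<close> by simp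
    finally have "(G ^^ (k - b + a)) y = y" .
    moreover have "0 < k - b + a" "k - b + a < k" using that by linarith+
    ultimately show False
      using not_less_Least[of "k - b + a" "\<lambda>d. 0 < d \<and> (G ^^ d) y = y"]
      unfolding k_def[symmetric] by blast
  qed
  then have "inj_on (\<lambda>n. (G ^^ n) y) {..<k}"
    by (intro linorder_inj_onI') auto
  then show ?thesis using k that by blast
qed

lemma periodic_shift:
  fixes k :: nat
  assumes "0 < k" "\<And>n. B n = B (n mod k)"
  shows "\<exists>l\<le>k - 1. B n = B (j + l)"
proof -
  have "(j + (n + (k - 1) * j) mod k) mod k = (n + (j + (k - 1) * j)) mod k"
    by (simp add: mod_add_right_eq add.left_commute)
  also have "j + (k - 1) * j = j * k"
    using assms(1) by (cases k) auto
  finally have "B n = B (j + (n + (k - 1) * j) mod k)"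
    using assms(2) by (metis mod_mult_self1)
  moreover have "(n + (k - 1) * j) mod k \<le> k - 1"
    using assms(1) by (simp add: less_Suc_eq_le[symmetric])
  ultimately show ?thesis by blast
qed

lemma connected_on_cyclic_Union_Diff:
  fixes k :: nat
  assumes k: "0 < k" and B_mod: "\<And>n. B n = B (n mod k)"
    and x_in: "\<And>n. x n \<in> B n" and link: "\<And>n. x (Suc n) \<in> B n"
    and conn: "\<And>n. connected_on E (B n - Z)"
    and avoid: "\<And>d. 0 < d \<Longrightarrow> d < k \<Longrightarrow> x (j + d) \<notin> Z"
  shows "connected_on E ((\<Union>n. B n) - Z)"
proof -
  have "connected_on E (\<Union>l\<le>k - 1. B (j + l) - Z)"
  proof (rule connected_on_chain)
    show "connected_on E (B (j + l) - Z)" for l by (rule conn)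
    fix l assume "l < k - 1"
    then have "x (j + Suc l) \<in> (B (j + l) - Z) \<inter> (B (j + Suc l) - Z)"
      using x_in link[of "j + l"] avoid[of "Suc l"] by auto
    then show "(B (j + l) - Z) \<inter> (B (j + Suc l) - Z) \<noteq> {}" by blast
  qed
  moreover have "(\<Union>l\<le>k - 1. B (j + l) - Z) = (\<Union>n. B n) - Z"
    using periodic_shift[of k B, OF k B_mod, of _ j] by blast
  ultimately show ?thesis by simp
qed

text \<open>Deleting a vertex breaks the cyclic chain of links at most once, at some x j, and
  walking once around the cycle starting just after x j still reaches every set.\<close>
lemma nonseparable_on_cyclic_Union:
  assumes k: "0 < k"
    and B_mod: "\<And>n. B n = B (n mod k)" and x_mod: "\<And>n. x n = x (n mod k)"
    and inj: "inj_on x {..<k}"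
    and ns: "\<And>n. nonseparable_on E (B n)"
    and x_in: "\<And>n. x n \<in> B n" and link: "\<And>n. x (Suc n) \<in> B n" and step: "\<And>n. x (Suc n) \<noteq> x n"
  shows "nonseparable_on E (\<Union>n. B n)"
  unfolding nonseparable_on_def
proof (intro conjI ballI impI)
  note walk = connected_on_cyclic_Union_Diff[OF k B_mod x_in link]
  have "connected_on E ((\<Union>n. B n) - {})"
    by (rule walk[where j = 0]) (use ns in \<open>auto simp: nonseparable_on_def\<close>)
  then show "connected_on E (\<Union>n. B n)" by simp
  have conn_del: "connected_on E (B n - {z})" for n z
  proof (rule nonseparable_on_Diff[OF ns])
    show "B n - {z} \<noteq> {}" using x_in link step by blast
  qed
  fix z
  show "connected_on E ((\<Union>n. B n) - {z})"
  proof (cases "z \<in> x ` {..<k}")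
    case True
    then obtain j where j: "j < k" "z = x j" by blast
    have "x (j + d) \<noteq> x j" if "0 < d" "d < k" for d
    proof -
      have "(j + d) mod k \<noteq> j"
        using j(1) that by (cases "j + d < k") (auto simp: le_mod_geq)
      then show ?thesis
        using inj x_mod[of "j + d"] j(1) k by (simp add: inj_on_eq_iff)
    qed
    then show ?thesis using j by (intro walk conn_del) auto
  next
    case False
    have "x d \<noteq> z" for d
      using False x_mod[of d] k by (metis lessThan_iff mod_less_divisor image_eqI)
    then show ?thesis by (intro walk[where j = 0] conn_del) auto
  qed
qed

text \<open>Following the map from block to block must close a cycle of distinct blocks, and the
  union of such a cycle would be a nonseparable set strictly larger than a block.\<close>
lemma no_block_changing_self_map:
  assumes "finite C" "c \<in> C"
    and h: "\<And>v. v \<in> C \<Longrightarrow> is_block V E (h v) \<and> v \<in> h v"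
    and G: "\<And>v. v \<in> C \<Longrightarrow> G v \<in> C \<and> G v \<in> h v"
    and change: "\<And>v. v \<in> C \<Longrightarrow> h (G v) \<noteq> h v"
  shows False
proof -
  obtain y d where y: "y \<in> C" and d: "0 < d" "(G ^^ d) y = y"
    using finite_self_map_periodic_point[OF assms(1,2)] G by metis
  obtain k where k: "0 < k" "(G ^^ k) y = y" and inj: "inj_on (\<lambda>n. (G ^^ n) y) {..<k}"
    using d by (rule funpow_least_period_inj_on)
  define x where "x n = (G ^^ n) y" for n
  define B where "B n = h (x n)" for n
  have x_C: "x n \<in> C" for n
    unfolding x_def using y G by (induction n) auto
  have x_mod: "x n = x (n mod k)" for n
    unfolding x_def using funpow_mod_eq[OF k(2)] by simp
  have "nonseparable_on E (\<Union>n. B n)"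
  proof (rule nonseparable_on_cyclic_Union[OF k(1)])
    show "B n = B (n mod k)" for n unfolding B_def using x_mod by simp
    show "x n = x (n mod k)" for n by (rule x_mod)
    show "inj_on x {..<k}" using inj unfolding x_def .
    show "nonseparable_on E (B n)" for n
      using h[OF x_C] unfolding B_def is_block_def by blast
    show "x n \<in> B n" for n using h[OF x_C] unfolding B_def by blast
    have x_Suc: "x (Suc n) = G (x n)" for n unfolding x_def by simp
    show "x (Suc n) \<in> B n" for n using G[OF x_C] unfolding B_def x_Suc by blast
    show "x (Suc n) \<noteq> x n" for n using change[OF x_C] unfolding x_Suc by metis
  qed
  moreover have "(\<Union>n. B n) \<subseteq> V"
    using h[OF x_C] unfolding B_def is_block_def by blast
  moreover have block: "is_block V E (B n)" for n
    using h[OF x_C] unfolding B_def by blast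
  ultimately have "(\<Union>n. B n) = B n" for n
    by (intro is_block_maximal[OF block]) blast+
  then have "B 1 = B 0" by metis
  then show False using change[OF y] unfolding B_def x_def by simp
qed

lemma no_alternating_block_witnesses:
  assumes "finite C" "c \<in> C"
    and bad: "\<And>v. v \<in> C \<Longrightarrow> \<exists>B. is_block V E B \<and> v \<in> B \<and> B \<subseteq> C \<and> \<not> P B v"
    and good: "\<And>B. is_block V E B \<Longrightarrow> B \<subseteq> C \<Longrightarrow> \<exists>x\<in>B. P B x"
  shows False
proof -
  define h where "h v = (SOME B. is_block V E B \<and> v \<in> B \<and> B \<subseteq> C \<and> \<not> P B v)" for v
  define G where "G v = (SOME x. x \<in> h v \<and> P (h v) x)" for v
  have h: "is_block V E (h v) \<and> v \<in> h v \<and> h v \<subseteq> C \<and> \<not> P (h v) v" if "v \<in> C" for v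
    using someI_ex[OF bad[OF that]] unfolding h_def .
  have G: "G v \<in> h v \<and> P (h v) (G v)" if "v \<in> C" for v
  proof -
    have "\<exists>x. x \<in> h v \<and> P (h v) x" using good h[OF that] by blast
    then show ?thesis unfolding G_def by (rule someI_ex)
  qed
  show False
  proof (rule no_block_changing_self_map[OF assms(1,2)])
    show "is_block V E (h v) \<and> v \<in> h v" if "v \<in> C" for v using h[OF that] by blast
    show G_C: "G v \<in> C \<and> G v \<in> h v" if "v \<in> C" for v using G[OF that] h[OF that] by blast
    show "h (G v) \<noteq> h v" if "v \<in> C" for v
      using G[OF that] h[of "G v"] G_C[OF that] by auto
  qed
qed

section \<open>Five-cycles\<close>

lemma less_5_cases: "(i::nat) < 5 \<Longrightarrow> i = 0 \<or> i = 1 \<or> i = 2 \<or> i = 3 \<or> i = 4"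
  by auto

lemma is_C5E:
  assumes "is_C5 E B"
  obtains w :: "nat \<Rightarrow> 'a" where "inj_on w {..<5}" "B = w ` {..<5}"
    "\<And>i j. i < 5 \<Longrightarrow> j < 5 \<Longrightarrow> E (w i) (w j) \<longleftrightarrow> j = Suc i mod 5 \<or> i = Suc j mod 5"
  using assms that unfolding is_C5_def by blast

lemma C5_card: "is_C5 E B \<Longrightarrow> card B = 5"
  by (elim is_C5E) (simp add: card_image)

lemma C5_neighbours:
  assumes "is_C5 E B" "v \<in> B"
  obtains a b where "a \<noteq> b" "{u \<in> B. E v u} = {a, b}"
proof -
  obtain w where inj: "inj_on w {..<5}" and B: "B = w ` {..<5}"
    and e: "\<And>i j. i < 5 \<Longrightarrow> j < 5 \<Longrightarrow> E (w i) (w j) \<longleftrightarrow> j = Suc i mod 5 \<or> i = Suc j mod 5"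
    using assms(1) by (rule is_C5E) blast
  obtain i where i: "i < 5" "v = w i" using assms(2) B by auto
  have "w (Suc i mod 5) \<noteq> w ((i + 4) mod 5)"
  proof
    assume "w (Suc i mod 5) = w ((i + 4) mod 5)"
    then have "Suc i mod 5 = (i + 4) mod 5" by (rule inj_onD[OF inj]) auto
    then show False using less_5_cases[OF i(1)] by (elim disjE) simp_all
  qed
  moreover have "{u \<in> B. E v u} = w ` {Suc i mod 5, (i + 4) mod 5}"
  proof -
    have "E (w i) (w j) \<longleftrightarrow> j = Suc i mod 5 \<or> j = (i + 4) mod 5" if "j < 5" for j
    proof -
      have "i = Suc j mod 5 \<longleftrightarrow> j = (i + 4) mod 5"
        using less_5_cases[OF i(1)] less_5_cases[OF that] by (elim disjE) simp_all
      then show ?thesis using e[OF i(1) that] by (simp only:)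
    qed
    then have "{j \<in> {..<5}. E (w i) (w j)} = {Suc i mod 5, (i + 4) mod 5}"
      by auto
    then show ?thesis
      unfolding B i(2) by blast
  qed
  ultimately show ?thesis by (intro that) auto
qed

lemma C5_adjacent_or_common_neighbour:
  assumes "is_C5 E B" "u \<in> B" "u' \<in> B" "u \<noteq> u'"
  shows "E u u' \<or> (\<exists>v\<in>B. E v u \<and> E v u')"
proof -
  obtain w where B: "B = w ` {..<5}"
    and e: "\<And>i j. i < 5 \<Longrightarrow> j < 5 \<Longrightarrow> E (w i) (w j) \<longleftrightarrow> j = Suc i mod 5 \<or> i = Suc j mod 5"
    using assms(1) by (rule is_C5E) blast
  obtain i j where ij: "i < 5" "j < 5" "u = w i" "u' = w j" "i \<noteq> j"
    using assms(2-4) B by auto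
  have common: "E (w (Suc m mod 5)) (w m) \<and> E (w (Suc m mod 5)) (w ((m + 2) mod 5))"
    if "m < 5" for m
  proof -
    have "(m + 2) mod 5 = Suc (Suc m mod 5) mod 5" by (simp add: mod_Suc_eq)
    then show ?thesis using e that by simp
  qed
  have "(j = Suc i mod 5 \<or> i = Suc j mod 5) \<or> j = (i + 2) mod 5 \<or> i = (j + 2) mod 5"
    using less_5_cases[OF ij(1)] less_5_cases[OF ij(2)] ij(5) by (elim disjE) simp_all
  then consider "j = Suc i mod 5 \<or> i = Suc j mod 5" | "j = (i + 2) mod 5" | "i = (j + 2) mod 5"
    by blast
  then show ?thesis
  proof cases
    case 1
    then show ?thesis using e ij by blast
  next
    case 2
    then show ?thesis using common[OF ij(1)] ij B by auto
  next
    case 3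
    then show ?thesis using common[OF ij(2)] ij B by auto
  qed
qed

definition monochromatic_nbhd :: "('a \<Rightarrow> 'a \<Rightarrow> bool) \<Rightarrow> ('a \<Rightarrow> 'c) \<Rightarrow> 'a set \<Rightarrow> 'a \<Rightarrow> bool" where
  "monochromatic_nbhd E f B v \<longleftrightarrow> (\<forall>u\<in>B. \<forall>u'\<in>B. E v u \<longrightarrow> E v u' \<longrightarrow> f u = f u')"

text \<open>Otherwise the colouring is injective on the 5-cycle, since any two vertices are
  adjacent or have a common neighbour.\<close>
lemma C5_monochromatic_vertex:
  assumes C5: "is_C5 E B" and proper: "\<forall>u\<in>B. \<forall>u'\<in>B. E u u' \<longrightarrow> f u \<noteq> f u'"
    and colours: "card (f ` B) \<le> 4"
  shows "\<exists>v\<in>B. monochromatic_nbhd E f B v"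
proof (rule ccontr)
  assume none: "\<not> ?thesis"
  have "inj_on f B"
  proof (rule inj_onI, rule ccontr)
    fix u u' assume u: "u \<in> B" "u' \<in> B" "f u = f u'" "u \<noteq> u'"
    then consider "E u u'" | v where "v \<in> B" "E v u" "E v u'"
      using C5_adjacent_or_common_neighbour[OF C5] by blast
    then show False
    proof cases
      case 1
      then show False using proper u by blast
    next
      case 2
      obtain a b where ab: "{x \<in> B. E v x} = {a, b}"
        using C5_neighbours[OF C5 \<open>v \<in> B\<close>] by blast
      then have "u \<in> {a, b}" "u' \<in> {a, b}" using 2 u by blast+
      then have nbhd: "{x \<in> B. E v x} = {u, u'}" using ab \<open>u \<noteq> u'\<close> by auto
      obtain x y where "x \<in> B" "y \<in> B" "E v x" "E v y" "f x \<noteq> f y"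
        using none \<open>v \<in> B\<close> unfolding monochromatic_nbhd_def by blast
      moreover have "z = u \<or> z = u'" if "z \<in> B" "E v z" for z
      proof -
        have "z \<in> {x \<in> B. E v x}" using that by simp
        then show ?thesis unfolding nbhd by simp
      qed
      ultimately show False using u(3) by metis
    qed
  qed
  then have "card (f ` B) = 5" using C5_card[OF C5] by (simp add: card_image)
  then show False using colours by simp
qed

section \<open>Odd colourings\<close>

lemma card_neighbours_sum_blocks:
  assumes G: "simple_graph V E" and A: "A \<subseteq> {u. E v u}"
  shows "card A = (\<Sum>B | is_block V E B \<and> v \<in> B. card (A \<inter> B))"
proof -
  let ?Bs = "{B. is_block V E B \<and> v \<in> B}"
  have finV: "finite V" and irrefl: "\<not> E v v" and edges: "\<And>u. E v u \<Longrightarrow> u \<in> V"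
    using G unfolding simple_graph_def by blast+
  have "?Bs \<subseteq> Pow V" unfolding is_block_def by blast
  then have finBs: "finite ?Bs" using finV by (simp add: finite_subset)
  have "A \<subseteq> V" using A edges by blast
  then have finA: "finite A" using finV by (rule finite_subset)
  have disjoint: "A \<inter> B \<inter> (A \<inter> B') = {}" if "B \<in> ?Bs" "B' \<in> ?Bs" "B \<noteq> B'" for B B'
  proof (rule ccontr)
    assume "A \<inter> B \<inter> (A \<inter> B') \<noteq> {}"
    then obtain u where u: "u \<in> A" "u \<in> B" "u \<in> B'" by blast
    then have "u \<noteq> v" using A irrefl by blast
    then have "B = B'" using is_block_eq[of V E B B' u v] that(1,2) u(2,3) by simp
    then show False using that(3) by contradiction
  qed
  have "card (\<Union>B\<in>?Bs. A \<inter> B) = (\<Sum>B\<in>?Bs. card (A \<inter> B))"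
    by (rule card_UN_disjoint[OF finBs]) (use finA disjoint in simp_all)
  moreover have "(\<Union>B\<in>?Bs. A \<inter> B) = A"
  proof
    show "A \<subseteq> (\<Union>B\<in>?Bs. A \<inter> B)"
    proof
      fix u assume "u \<in> A"
      then obtain B where "is_block V E B" "v \<in> B" "u \<in> B"
        using A edge_in_block[OF G] by blast
      then show "u \<in> (\<Union>B\<in>?Bs. A \<inter> B)" using \<open>u \<in> A\<close> by blast
    qed
  qed blast
  ultimately show ?thesis by simp
qed

text \<open>Otherwise each block through v contributes an even number of neighbours, all of one
  colour, to every colour class of the neighbourhood of v.\<close>
lemma odd_coloring_non_monochromatic_block:
  assumes odd: "odd_coloring V E c f" and G: "simple_graph V E" and "v \<in> V" "E v w"
    and even: "\<And>B. is_block V E B \<Longrightarrow> v \<in> B \<Longrightarrow> even (card {u \<in> B. E v u})"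
  shows "\<exists>B. is_block V E B \<and> v \<in> B \<and> \<not> monochromatic_nbhd E f B v"
proof (rule ccontr)
  assume "\<nexists>B. is_block V E B \<and> v \<in> B \<and> \<not> monochromatic_nbhd E f B v"
  then have mono: "monochromatic_nbhd E f B v" if "is_block V E B" "v \<in> B" for B
    using that by blast
  have "w \<in> V" using G \<open>E v w\<close> unfolding simple_graph_def by blast
  then obtain k where k: "odd (card {u \<in> V. E v u \<and> f u = k})"
    using odd \<open>v \<in> V\<close> \<open>E v w\<close> unfolding odd_coloring_def by blast
  let ?A = "{u \<in> V. E v u \<and> f u = k}"
  have even_A: "even (card (?A \<inter> B))" if B: "is_block V E B" "v \<in> B" for B
  proof (cases "\<exists>u\<in>B. E v u \<and> f u = k")
    case True
    then obtain u0 where u0: "u0 \<in> B" "E v u0" "f u0 = k" by blast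
    have "f u = k" if "u \<in> B" "E v u" for u
      using mono[OF B] u0 that unfolding monochromatic_nbhd_def by metis
    moreover have "B \<subseteq> V" using B(1) unfolding is_block_def by blast
    ultimately have "?A \<inter> B = {u \<in> B. E v u}" by blast
    then show ?thesis using even[OF B] by simp
  next
    case False
    then have "?A \<inter> B = {}" by blast
    then show ?thesis by simp
  qed
  have "card ?A = (\<Sum>B | is_block V E B \<and> v \<in> B. card (?A \<inter> B))"
    by (rule card_neighbours_sum_blocks[OF G]) blast
  also have "even \<dots>" by (rule dvd_sum) (use even_A in blast)
  finally show False using k by contradiction
qed

lemma odd_coloring_C5_block_non_monochromatic:
  assumes odd: "odd_coloring V E c f" and graph: "simple_graph V E"
    and comp: "is_component V E C" and C5: "\<And>B. is_block V E B \<Longrightarrow> B \<subseteq> C \<Longrightarrow> is_C5 E B"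
    and v: "v \<in> C" and "w \<in> C" "w \<noteq> v"
  shows "\<exists>B. is_block V E B \<and> v \<in> B \<and> B \<subseteq> C \<and> \<not> monochromatic_nbhd E f B v"
proof -
  have "connected_on E C" "C \<subseteq> V" using comp unfolding is_component_def by simp_all
  then obtain u where "E v u" "v \<in> V"
    using connected_on_neighbour[OF _ v \<open>w \<in> C\<close> \<open>w \<noteq> v\<close>] v by blast
  moreover have "even (card {u \<in> B. E v u})" if B: "is_block V E B" "v \<in> B" for B
  proof -
    have "B \<subseteq> C" by (rule block_subset_component[OF comp B v])
    then have "is_C5 E B" by (rule C5[OF B(1)])
    then obtain x y where "x \<noteq> y" "{u \<in> B. E v u} = {x, y}"
      using B(2) by (rule C5_neighbours)
    then show ?thesis by simp
  qed
  ultimately obtain B where "is_block V E B" "v \<in> B" "\<not> monochromatic_nbhd E f B v"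
    using odd_coloring_non_monochromatic_block[OF odd graph] by blast
  then show ?thesis using block_subset_component[OF comp _ _ v] by blast
qed

lemma pcf_coloring_imp_odd_coloring:
  "pcf_coloring V E c f \<Longrightarrow> odd_coloring V E c f"
  unfolding pcf_coloring_def odd_coloring_def by (metis odd_one)

lemma in_H_componentE:
  assumes "1 \<le> t" "in_H t V E"
  obtains C a b where "simple_graph V E" "is_component V E C"
    "\<And>B. is_block V E B \<Longrightarrow> B \<subseteq> C \<Longrightarrow> is_C5 E B" "a \<in> C" "b \<in> C" "a \<noteq> b"
proof -
  have graph: "simple_graph V E" and "\<exists>C. is_component V E C \<and>
      card {B. is_block V E B \<and> B \<subseteq> C} = t \<and> (\<forall>B. is_block V E B \<and> B \<subseteq> C \<longrightarrow> is_C5 E B)"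
    using assms(2) unfolding in_H_def by simp_all
  then obtain C where comp: "is_component V E C"
    and t: "card {B. is_block V E B \<and> B \<subseteq> C} = t"
    and C5: "\<And>B. is_block V E B \<Longrightarrow> B \<subseteq> C \<Longrightarrow> is_C5 E B"
    by blast
  have "{B. is_block V E B \<and> B \<subseteq> C} \<noteq> {}"
  proof
    assume none: "{B. is_block V E B \<and> B \<subseteq> C} = {}"
    have "t = 0" using t unfolding none by simp
    then show False using assms(1) by simp
  qed
  then obtain B0 where B0: "is_block V E B0" "B0 \<subseteq> C" by blast
  have "card B0 = 5" using C5_card[OF C5[OF B0]] .
  then have "finite B0" by (intro card_ge_0_finite) simp
  then have "\<not> (\<forall>x\<in>B0. \<forall>y\<in>B0. x = y)"
    using \<open>card B0 = 5\<close> by (simp flip: card_le_Suc0_iff_eq)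
  then obtain a b where "a \<in> C" "b \<in> C" "a \<noteq> b" using B0(2) by blast
  then show ?thesis using that[OF graph comp C5] by blast
qed

lemma in_H_no_odd_4_coloring:
  assumes "1 \<le> t" "in_H t V E"
  shows "\<not> odd_coloring V E 4 f"
proof
  assume odd: "odd_coloring V E 4 f"
  obtain C a b where graph: "simple_graph V E" and comp: "is_component V E C"
    and C5: "\<And>B. is_block V E B \<Longrightarrow> B \<subseteq> C \<Longrightarrow> is_C5 E B" and ab: "a \<in> C" "b \<in> C" "a \<noteq> b"
    using in_H_componentE[OF assms] by blast
  have finV: "finite V" using graph unfolding simple_graph_def by simp
  have CV: "C \<subseteq> V" using comp unfolding is_component_def by simp
  have proper: "\<forall>u\<in>V. \<forall>u'\<in>V. E u u' \<longrightarrow> f u \<noteq> f u'" and colours: "card (f ` V) \<le> 4"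
    using odd unfolding odd_coloring_def proper_coloring_def by simp_all
  show False
  proof (rule no_alternating_block_witnesses[where P = "\<lambda>B. monochromatic_nbhd E f B"])
    show "finite C" using CV finV by (rule finite_subset)
    show "a \<in> C" by (rule ab(1))
    show "\<exists>B. is_block V E B \<and> v \<in> B \<and> B \<subseteq> C \<and> \<not> monochromatic_nbhd E f B v"
      if "v \<in> C" for v
    proof -
      obtain w where "w \<in> C" "w \<noteq> v" using ab by blast
      then show ?thesis using odd_coloring_C5_block_non_monochromatic[OF odd graph comp C5 that] by blast
    qed
    show "\<exists>x\<in>B. monochromatic_nbhd E f B x" if "is_block V E B" "B \<subseteq> C" for B
    proof (rule C5_monochromatic_vertex[OF C5[OF that]])
      show "\<forall>u\<in>B. \<forall>u'\<in>B. E u u' \<longrightarrow> f u \<noteq> f u'" using proper that(2) CV by blast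
      have "card (f ` B) \<le> card (f ` V)" using that(2) CV finV by (intro card_mono) auto
      then show "card (f ` B) \<le> 4" using colours by simp
    qed
  qed
qed

theorem mainTheorem4:
  fixes t :: nat and V :: "'a set" and E :: "'a \<Rightarrow> 'a \<Rightarrow> bool"
  assumes "t \<ge> 1" and "in_H t V E"
  shows "(\<nexists>f :: 'a \<Rightarrow> nat. odd_coloring V E 4 f) \<and> (\<nexists>f :: 'a \<Rightarrow> nat. pcf_coloring V E 4 f)"
  using in_H_no_odd_4_coloring[OF assms] pcf_coloring_imp_odd_coloring by blast

end
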